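(* For any value $\gamma \in (0,1]$, the set function $\mathbf{S} \mapsto G(\mathbf{S},\gamma)$, defined on sub-multisets $\mathbf{S}\subseteq\mathbf{W}$ by $$G(\mathbf{S},\gamma) = \sum_{f\in\mathbf{F}}\sum_{t\in\mathrm{dom}(\mathbf{W},f)} d(t)\cdot\log\left(\frac{m_{\mathbf{S}}(t,f)+\gamma}{\gamma}\right),$$ is non-negative, monotone and submodular.
   Context: A workload $\mathbf{W}$ is a finite multiset of queries; $\mathbf{S}\subseteq\mathbf{W}$ ranges over sub-multisets. There is a finite set $\mathbf{F}$ of features; for each query $q$ and feature $f$, $f(q)$ is a finite multiset of tokens; $f(\mathbf{S}) = \biguplus_{q\in\mathbf{S}} f(q)$, $\mathrm{dom}(\mathbf{W},f)$ is the set of distinct tokens in $f(\mathbf{W})$, and $m_{\mathbf{S}}(t,f)$ is the multiplicity of token $t$ in $f(\mathbf{S})$. $d$ is a target probability distribution on the tokens $\{(f,t): t\in\mathrm{dom}(\mathbf{W},f)\}$. Monotone: $A\subseteq B\Rightarrow G(A)\le G(B)$; submodular: $G(A\cup\{q\})-G(A)\ge G(B\cup\{q\})-G(B)$ for $A\subseteq B$. *)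

theory Defs
  imports "HOL-Library.Multiset" Complex_Main
begin

definition feat_ms :: "('f \<Rightarrow> 'q \<Rightarrow> 't multiset) \<Rightarrow> 'f \<Rightarrow> 'q multiset \<Rightarrow> 't multiset" where
  "feat_ms feat f S = sum_mset (image_mset (feat f) S)"

definition tok_dom :: "('f \<Rightarrow> 'q \<Rightarrow> 't multiset) \<Rightarrow> 'q multiset \<Rightarrow> 'f \<Rightarrow> 't set" where
  "tok_dom feat W f = set_mset (feat_ms feat f W)"

definition mult_tok :: "('f \<Rightarrow> 'q \<Rightarrow> 't multiset) \<Rightarrow> 'q multiset \<Rightarrow> 't \<Rightarrow> 'f \<Rightarrow> nat" where
  "mult_tok feat S t f = count (feat_ms feat f S) t"

definition is_token_distribution ::
  "'f set \<Rightarrow> ('f \<Rightarrow> 'q \<Rightarrow> 't multiset) \<Rightarrow> 'q multiset \<Rightarrow> ('f \<times> 't \<Rightarrow> real) \<Rightarrow> bool" where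
  "is_token_distribution F feat W d \<longleftrightarrow>
     (\<forall>f\<in>F. \<forall>t\<in>tok_dom feat W f. d (f, t) \<ge> 0) \<and>
     (\<Sum>f\<in>F. \<Sum>t\<in>tok_dom feat W f. d (f, t)) = 1"

definition G_fun ::
  "'f set \<Rightarrow> ('f \<Rightarrow> 'q \<Rightarrow> 't multiset) \<Rightarrow> 'q multiset \<Rightarrow> ('f \<times> 't \<Rightarrow> real) \<Rightarrow> 'q multiset \<Rightarrow> real \<Rightarrow> real" where
  "G_fun F feat W d S \<gamma> =
     (\<Sum>f\<in>F. \<Sum>t\<in>tok_dom feat W f.
        d (f, t) * ln ((real (mult_tok feat S t f) + \<gamma>) / \<gamma>))"

end

theory Submission
  imports Defs
begin

text \<open>Each summand of \<open>G\<close> is a nonnegative weight times \<open>ln ((m + \<gamma>) / \<gamma>)\<close>, where the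
  multiplicity \<open>m\<close> is additive in \<open>S\<close>. Since \<open>ln\<close> is increasing and concave, this term is
  nonnegative, monotone in \<open>m\<close>, and a fixed increment of \<open>m\<close> gains less the larger \<open>m\<close> already is;
  all three properties survive nonnegative linear combinations.\<close>

lemma feat_ms_union: "feat_ms feat f (A + B) = feat_ms feat f A + feat_ms feat f B"
  by (simp add: feat_ms_def)

lemma mult_tok_union: "mult_tok feat (A + B) t f = mult_tok feat A t f + mult_tok feat B t f"
  by (simp add: mult_tok_def feat_ms_union)

lemma mult_tok_mono:
  assumes "A \<subseteq># B"
  shows "mult_tok feat A t f \<le> mult_tok feat B t f"
proof -
  from assms obtain C where "B = A + C"
    using subset_mset.le_iff_add by blast
  then show ?thesis
    by (simp add: mult_tok_union)
qed

lemma ln_scaled_mono: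
  fixes x y g :: real
  assumes "0 < g" "0 \<le> x" "x \<le> y"
  shows "ln ((x + g) / g) \<le> ln ((y + g) / g)"
  using assms by (simp add: divide_right_mono)

lemma ln_increment_antimono:
  fixes x y c :: real
  assumes "0 < x" "x \<le> y" "0 \<le> c"
  shows "ln (y + c) - ln y \<le> ln (x + c) - ln x"
proof -
  have "ln (z + c) - ln z = ln (1 + c / z)" if "0 < z" for z
  proof -
    have "ln (z + c) - ln z = ln ((z + c) / z)"
      using that assms(3) by (simp add: ln_div)
    also have "(z + c) / z = 1 + c / z"
      using that by (simp add: field_simps)
    finally show ?thesis .
  qed
  moreover have "c / y \<le> c / x"
    using assms by (simp add: divide_left_mono)
  moreover have "0 \<le> c / y"
    using assms by simp
  moreover have "ln (1 + c / y) \<le> ln (1 + c / x)"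
    using \<open>c / y \<le> c / x\<close> \<open>0 \<le> c / y\<close> by (subst ln_le_cancel_iff; linarith)
  ultimately show ?thesis
    using assms by simp
qed

lemma ln_scaled_increment_antimono:
  fixes x y c g :: real
  assumes "0 < g" "0 \<le> x" "x \<le> y" "0 \<le> c"
  shows "ln ((y + c + g) / g) - ln ((y + g) / g) \<le> ln ((x + c + g) / g) - ln ((x + g) / g)"
proof -
  have ln_scaled: "ln ((z + g) / g) = ln (z + g) - ln g" if "0 \<le> z" for z
    using that assms(1) by (simp add: ln_div)
  have "ln (y + g + c) - ln (y + g) \<le> ln (x + g + c) - ln (x + g)"
    using assms by (intro ln_increment_antimono) auto
  then show ?thesis
    using assms ln_scaled[of x] ln_scaled[of y] ln_scaled[of "x + c"] ln_scaled[of "y + c"]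
    by (simp add: add_ac)
qed

context
  fixes F :: "'f set" and feat :: "'f \<Rightarrow> 'q \<Rightarrow> 't multiset"
    and W :: "'q multiset" and d :: "'f \<times> 't \<Rightarrow> real" and \<gamma> :: real
  assumes weights_nonneg: "\<And>f t. f \<in> F \<Longrightarrow> t \<in> tok_dom feat W f \<Longrightarrow> 0 \<le> d (f, t)"
    and gamma_pos: "0 < \<gamma>"
begin

lemma G_fun_nonneg: "0 \<le> G_fun F feat W d S \<gamma>"
  unfolding G_fun_def
  using gamma_pos by (intro sum_nonneg mult_nonneg_nonneg weights_nonneg) auto

lemma G_fun_mono:
  assumes "A \<subseteq># B"
  shows "G_fun F feat W d A \<gamma> \<le> G_fun F feat W d B \<gamma>"
  unfolding G_fun_def
  using gamma_pos mult_tok_mono[OF assms]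
  by (intro sum_mono mult_left_mono weights_nonneg ln_scaled_mono) auto

lemma G_fun_submodular:
  assumes "A \<subseteq># B"
  shows "G_fun F feat W d (B + C) \<gamma> - G_fun F feat W d B \<gamma>
    \<le> G_fun F feat W d (A + C) \<gamma> - G_fun F feat W d A \<gamma>"
  unfolding G_fun_def sum_subtractf[symmetric] right_diff_distrib[symmetric] mult_tok_union of_nat_add
  using gamma_pos mult_tok_mono[OF assms]
  by (intro sum_mono mult_left_mono weights_nonneg ln_scaled_increment_antimono) auto

end

theorem proposition5p1:
  fixes F :: "'f set" and feat :: "'f \<Rightarrow> 'q \<Rightarrow> 't multiset"
    and W :: "'q multiset" and d :: "'f \<times> 't \<Rightarrow> real" and \<gamma> :: real
  assumes "finite F"
    and "is_token_distribution F feat W d"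
    and "0 < \<gamma>" and "\<gamma> \<le> 1"
  shows "(\<forall>S. S \<subseteq># W \<longrightarrow> 0 \<le> G_fun F feat W d S \<gamma>)
    \<and> (\<forall>A B. A \<subseteq># B \<and> B \<subseteq># W \<longrightarrow> G_fun F feat W d A \<gamma> \<le> G_fun F feat W d B \<gamma>)
    \<and> (\<forall>A B q. A \<subseteq># B \<and> B + {#q#} \<subseteq># W \<longrightarrow>
          G_fun F feat W d (A + {#q#}) \<gamma> - G_fun F feat W d A \<gamma>
            \<ge> G_fun F feat W d (B + {#q#}) \<gamma> - G_fun F feat W d B \<gamma>)"
proof -
  have weights_nonneg: "\<And>f t. f \<in> F \<Longrightarrow> t \<in> tok_dom feat W f \<Longrightarrow> 0 \<le> d (f, t)"
    using assms(2) unfolding is_token_distribution_def by blast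
  show ?thesis
    using G_fun_nonneg[of F feat W d \<gamma>] G_fun_mono[of F feat W d \<gamma>]
      G_fun_submodular[of F feat W d \<gamma>] weights_nonneg assms(3)
    by blast
qed

end
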